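(* There exists a unique bilinear pairing $\langle-,-\rangle:\mathcal{H}\times\mathcal{H}\to K$ such that: (1) $\langle 1,x\rangle=\varepsilon(x)$ for all $x\in\mathcal{H}$; (2) $\langle xy,z\rangle=\langle y\otimes x,\Delta(z)\rangle$ for all $x,y,z\in\mathcal{H}$, where $\langle a\otimes b,c\otimes d\rangle=\langle a,c\rangle\langle b,d\rangle$; (3) $\langle B^+(x),y\rangle=\langle x,\gamma(y)\rangle$ for all $x,y\in\mathcal{H}$. Moreover: (4) $\langle-,-\rangle$ is symmetric and non-degenerate; (5) if $x,y$ are homogeneous of different weights then $\langle x,y\rangle=0$; (6) $\langle S(x),y\rangle=\langle x,S(y)\rangle$ for all $x,y\in\mathcal{H}$, where $S$ is the antipode of $\mathcal{H}$.
   Context: Let $K$ be a field. Planar rooted trees have their children linearly ordered left to right; a planar forest is a finite, possibly empty, sequence $t_1\cdots t_n$ of planar rooted trees ($1$ = empty forest); the weight of a forest is its number of vertices. $\mathcal{H}$ is the free associative unital $K$-algebra on planar rooted trees, with basis the planar forests and product concatenation, graded by weight. $B^+(F)$ is the tree obtained by grafting the trees of $F$ (in order) on a new common root. $\varepsilon(F)=\delta_{F,1}$. $\Delta$ is the unique linear map with $\Delta(1)=1\otimes1$, $\Delta(xy)=(x\otimes1)\Delta(y)+\Delta(x)(1\otimes y)-x\otimes y$, $\Delta(B^+(x))=B^+(x)\otimes 1+(\mathrm{Id}\otimes B^+)\Delta(x)$; with it $\mathcal{H}$ is an infinitesimal Hopf algebra, whose antipode $S$ is the inverse of $\mathrm{Id}$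 for the convolution $f\star g=m\circ(f\otimes g)\circ\Delta$. The linear map $\gamma:\mathcal{H}\to\mathcal{H}$ is defined on forests by $\gamma(t_1\cdots t_n)=\delta_{t_1,\bullet}\,t_2\cdots t_n$ (where $\bullet$ is the one-vertex tree) and $\gamma(1)=0$. *)

theory Defs
  imports "HOL-Library.Poly_Mapping"
begin

text \<open>Planar rooted trees: a root with a (left-to-right ordered) list of subtrees.
  Planar forests are lists of planar trees; the empty list is the empty forest 1.\<close>
datatype ptree = Node "ptree list"

type_synonym forest = "ptree list"

text \<open>The algebra H: finitely supported K-linear combinations of planar forests;
  H \<otimes> H: finitely supported K-linear combinations of pairs of forests.\<close>
type_synonym 'k alg = "forest \<Rightarrow>\<^sub>0 'k"
type_synonym 'k alg2 = "(forest \<times> forest) \<Rightarrow>\<^sub>0 'k"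

fun wt_t :: "ptree \<Rightarrow> nat" and wt_f :: "forest \<Rightarrow> nat" where
  "wt_t (Node F) = Suc (wt_f F)"
| "wt_f [] = 0"
| "wt_f (t # ts) = wt_t t + wt_f ts"

definition homogeneous :: "nat \<Rightarrow> ('k::zero) alg \<Rightarrow> bool" where
  "homogeneous n x \<longleftrightarrow> (\<forall>F\<in>Poly_Mapping.keys x. wt_f F = n)"

definition bas :: "forest \<Rightarrow> ('k::{zero,one}) alg" where
  "bas F = Poly_Mapping.single F 1"

definition sc :: "'k::semiring_0 \<Rightarrow> ('a \<Rightarrow>\<^sub>0 'k) \<Rightarrow> ('a \<Rightarrow>\<^sub>0 'k)" where
  "sc c x = Poly_Mapping.map (\<lambda>v. c * v) x"

definition lin_map :: "('k::field alg \<Rightarrow> 'k alg) \<Rightarrow> bool" where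
  "lin_map f \<longleftrightarrow> (\<forall>x y. f (x + y) = f x + f y) \<and> (\<forall>c x. f (sc c x) = sc c (f x))"

definition bilinear_form :: "('k::field alg \<Rightarrow> 'k alg \<Rightarrow> 'k) \<Rightarrow> bool" where
  "bilinear_form B \<longleftrightarrow>
     (\<forall>x y z. B (x + y) z = B x z + B y z) \<and> (\<forall>c x z. B (sc c x) z = c * B x z) \<and>
     (\<forall>x y z. B z (x + y) = B z x + B z y) \<and> (\<forall>c x z. B z (sc c x) = c * B z x)"

definition mult :: "'k::field alg \<Rightarrow> 'k alg \<Rightarrow> 'k alg" where
  "mult x y = (\<Sum>F\<in>Poly_Mapping.keys x. \<Sum>G\<in>Poly_Mapping.keys y. Poly_Mapping.single (F @ G) (Poly_Mapping.lookup x F * Poly_Mapping.lookup y G))"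

definition tens :: "'k::field alg \<Rightarrow> 'k alg \<Rightarrow> 'k alg2" where
  "tens x y = (\<Sum>F\<in>Poly_Mapping.keys x. \<Sum>G\<in>Poly_Mapping.keys y. Poly_Mapping.single (F, G) (Poly_Mapping.lookup x F * Poly_Mapping.lookup y G))"

definition eps :: "'k::field alg \<Rightarrow> 'k" where
  "eps x = Poly_Mapping.lookup x []"

definition Bplus :: "'k::field alg \<Rightarrow> 'k alg" where
  "Bplus x = (\<Sum>F\<in>Poly_Mapping.keys x. Poly_Mapping.single [Node F] (Poly_Mapping.lookup x F))"

fun gamma_f :: "forest \<Rightarrow> 'k::field alg" where
  "gamma_f [] = 0"
| "gamma_f (t # ts) = (if t = Node [] then bas ts else 0)"

definition gamma :: "'k::field alg \<Rightarrow> 'k alg" where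
  "gamma x = (\<Sum>F\<in>Poly_Mapping.keys x. sc (Poly_Mapping.lookup x F) (gamma_f F))"

definition lmul2 :: "forest \<Rightarrow> 'k::field alg2 \<Rightarrow> 'k alg2" where
  "lmul2 x w = (\<Sum>(a, b)\<in>Poly_Mapping.keys w. Poly_Mapping.single (x @ a, b) (Poly_Mapping.lookup w (a, b)))"

definition rmul2 :: "'k::field alg2 \<Rightarrow> forest \<Rightarrow> 'k alg2" where
  "rmul2 w y = (\<Sum>(a, b)\<in>Poly_Mapping.keys w. Poly_Mapping.single (a, b @ y) (Poly_Mapping.lookup w (a, b)))"

definition idBplus :: "'k::field alg2 \<Rightarrow> 'k alg2" where
  "idBplus w = (\<Sum>(a, b)\<in>Poly_Mapping.keys w. Poly_Mapping.single (a, [Node b]) (Poly_Mapping.lookup w (a, b)))"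

text \<open>The coproduct on basis elements, via the defining recursion:
  Delta(1) = 1 \<otimes> 1,
  Delta(t ts) = (t \<otimes> 1) Delta(ts) + Delta(t) (1 \<otimes> ts) - t \<otimes> ts,
  Delta(B^+(F)) = B^+(F) \<otimes> 1 + (Id \<otimes> B^+) Delta(F).\<close>
fun delta_t :: "ptree \<Rightarrow> 'k::field alg2" and delta_f :: "forest \<Rightarrow> 'k::field alg2" where
  "delta_t (Node F) = Poly_Mapping.single ([Node F], []) 1 + idBplus (delta_f F)"
| "delta_f [] = Poly_Mapping.single ([], []) 1"
| "delta_f (t # ts) = lmul2 [t] (delta_f ts) + rmul2 (delta_t t) ts - Poly_Mapping.single ([t], ts) 1"

definition Delta :: "'k::field alg \<Rightarrow> 'k alg2" where
  "Delta x = (\<Sum>F\<in>Poly_Mapping.keys x. sc (Poly_Mapping.lookup x F) (delta_f F))"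

definition pair2 :: "('k::field alg \<Rightarrow> 'k alg \<Rightarrow> 'k) \<Rightarrow> 'k alg2 \<Rightarrow> 'k alg2 \<Rightarrow> 'k" where
  "pair2 B u v = (\<Sum>(a, b)\<in>Poly_Mapping.keys u. \<Sum>(c, d)\<in>Poly_Mapping.keys v.
      Poly_Mapping.lookup u (a, b) * Poly_Mapping.lookup v (c, d) * B (bas a) (bas c) * B (bas b) (bas d))"

definition conv :: "('k::field alg \<Rightarrow> 'k alg) \<Rightarrow> ('k alg \<Rightarrow> 'k alg) \<Rightarrow> 'k alg \<Rightarrow> 'k alg" where
  "conv f g x = (\<Sum>(a, b)\<in>Poly_Mapping.keys (Delta x). sc (Poly_Mapping.lookup (Delta x) (a, b)) (mult (f (bas a)) (g (bas b))))"

definition unit_counit :: "'k::field alg \<Rightarrow> 'k alg" where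
  "unit_counit x = sc (eps x) (bas [])"

definition is_antipode :: "('k::field alg \<Rightarrow> 'k alg) \<Rightarrow> bool" where
  "is_antipode S \<longleftrightarrow> lin_map S \<and> conv S id = unit_counit \<and> conv id S = unit_counit"

definition pairing_axioms :: "('k::field alg \<Rightarrow> 'k alg \<Rightarrow> 'k) \<Rightarrow> bool" where
  "pairing_axioms B \<longleftrightarrow> bilinear_form B
     \<and> (\<forall>x. B (bas []) x = eps x)
     \<and> (\<forall>x y z. B (mult x y) z = pair2 B (tens y x) (Delta z))
     \<and> (\<forall>x y. B (Bplus x) y = B x (gamma y))"

end

theory Submission
  imports Defs
begin

text \<open>
  On basis forests the pairing is the indicator of a relation \<open>paired F H\<close>, defined by
  recursion on \<open>F\<close> so that axioms (1)--(3) hold: the coproduct of a forest \<open>H\<close> is the sum over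
  \<open>k\<close> of its first \<open>k\<close> vertices in postorder tensored with the remaining ones, and \<open>\<gamma>\<close>
  removes a leading one-vertex tree. Bilinearity and this recursion force uniqueness, and symmetry
  is the statement that \<open>paired\<close> decomposes in the same way along its second argument.

  \<open>paired F H\<close> holds iff the subtree sizes of \<open>F\<close> are pointwise bounded by the numbers
  attached to the vertices of \<open>H\<close> by counting each vertex together with the subtrees of its
  younger siblings. The rotation of forests exchanging first children and next siblings turns
  the second sequence into the first, so the pairing matrix is unitriangular with respect to the
  total subtree size, whence non-degeneracy.

  Finally, on basis forests \<open>\<langle>S -, -\<rangle>\<close> and \<open>\<langle>-, S -\<rangle>\<close> are a left and a right
  inverse of the pairing for the convolution of forms dual to \<open>\<star>\<close>, hence they coincide.
\<close>

lemma nth_append_Cons: "(xs @ y # ys) ! p =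
    (if p < length xs then xs ! p else if p = length xs then y else ys ! (p - Suc (length xs)))"
  by (auto simp: nth_append nth_Cons')

lemma sum_eq_single:
  assumes "finite A" "a \<in> A" "\<And>x. x \<in> A \<Longrightarrow> x \<noteq> a \<Longrightarrow> g x = 0"
  shows "sum g A = g a"
proof -
  have "sum g A = sum g {a}"
    by (rule sum.mono_neutral_right) (use assms in auto)
  then show ?thesis by simp
qed

lemma sum_atMost_add: "(\<Sum>k\<le>a + b. g k) = (\<Sum>k\<le>a. g k) + (\<Sum>j<b. g (a + Suc j))"
  by (induction b) (auto simp: add.assoc)

lemma sum_atMost_shift0: "(\<Sum>j\<le>b. g j) = g 0 + (\<Sum>j<b. g (Suc j))"
  by (induction b) (auto simp: add.assoc)

lemma sum_triangle_split:
  "(\<Sum>a\<le>n. \<Sum>i\<le>a. g i (a - i)) = (\<Sum>i\<le>(n::nat). \<Sum>j\<le>n - i. (g i j :: 'k::comm_monoid_add))"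
proof -
  have "(\<Sum>a\<le>n. \<Sum>i\<le>a. g i (a - i)) = (\<Sum>(i, j)\<in>{(i, j). i + j \<le> n}. g i j)"
    by (rule sum.triangle_reindex_eq[symmetric])
  also have "{(i, j). i + j \<le> n} = Sigma {..n} (\<lambda>i. {..n - i})" by auto
  also have "(\<Sum>(i, j)\<in>Sigma {..n} (\<lambda>i. {..n - i}). g i j) = (\<Sum>i\<le>n. \<Sum>j\<le>n - i. g i j)"
    by (rule sum.Sigma[symmetric]) auto
  finally show ?thesis .
qed

lemma sum_triangle_shift:
  "(\<Sum>b\<le>m. \<Sum>c\<le>m - b. g b (b + c)) = (\<Sum>j\<le>(m::nat). \<Sum>b\<le>j. (g b j :: 'k::comm_monoid_add))"
proof -
  have "(\<Sum>b\<le>m. \<Sum>c\<le>m - b. g b (b + c)) = (\<Sum>a\<le>m. \<Sum>i\<le>a. g i (i + (a - i)))"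
    using sum_triangle_split[of "\<lambda>b c. g b (b + c)" m] by simp
  also have "\<dots> = (\<Sum>a\<le>m. \<Sum>i\<le>a. g i a)"
    by (rule sum.cong[OF refl], rule sum.cong[OF refl]) auto
  finally show ?thesis .
qed

lemma list_all2_append_left_take_drop:
  "list_all2 P (a @ b) v \<longleftrightarrow>
     length a \<le> length v \<and> list_all2 P a (take (length a) v) \<and> list_all2 P b (drop (length a) v)"
  by (auto simp: list_all2_append1 dest: list_all2_lengthD)
     (metis append_take_drop_id length_drop length_take list_all2_lengthD min.absorb2)

lemma sum_list_mono_list_all2:
  "list_all2 (\<le>) u v \<Longrightarrow> sum_list u \<le> sum_list (v :: 'a::ordered_comm_monoid_add list)"
  by (induction rule: list_all2_induct) (auto intro: add_mono)

lemma list_all2_le_sum_list_eq: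
  fixes u v :: "'a::ordered_ab_semigroup_monoid_add_imp_le list"
  assumes "list_all2 (\<le>) u v" "sum_list v \<le> sum_list u"
  shows "u = v"
  using assms
proof (induction rule: list_all2_induct)
  case (Cons x u y v)
  have "sum_list u \<le> sum_list v" using Cons.hyps(2) by (rule sum_list_mono_list_all2)
  have "y + sum_list v \<le> x + sum_list u" using Cons.prems by simp
  also have "\<dots> \<le> x + sum_list v" using \<open>sum_list u \<le> sum_list v\<close> by (rule add_left_mono)
  finally have "y \<le> x" by (rule add_le_imp_le_right)
  with \<open>x \<le> y\<close> have "x = y" by (rule antisym)
  then show ?case using Cons by simp
qed simp

definition linext :: "('a \<Rightarrow> 'k::comm_ring_1) \<Rightarrow> ('a \<Rightarrow>\<^sub>0 'k) \<Rightarrow> 'k" where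
  "linext \<phi> x = (\<Sum>F\<in>Poly_Mapping.keys x. Poly_Mapping.lookup x F * \<phi> F)"

lemma linext_superset:
  assumes "finite S" "Poly_Mapping.keys x \<subseteq> S"
  shows "linext \<phi> x = (\<Sum>F\<in>S. Poly_Mapping.lookup x F * \<phi> F)"
  unfolding linext_def
  by (rule sum.mono_neutral_left) (auto simp: assms in_keys_iff)

lemma linext_add: "linext \<phi> (x + y) = linext \<phi> x + linext \<phi> y"
proof -
  let ?S = "Poly_Mapping.keys x \<union> Poly_Mapping.keys y"
  have "linext \<phi> (x + y) = (\<Sum>F\<in>?S. Poly_Mapping.lookup (x + y) F * \<phi> F)"
    by (rule linext_superset) (auto simp: keys_add)
  also have "\<dots> = (\<Sum>F\<in>?S. Poly_Mapping.lookup x F * \<phi> F) + (\<Sum>F\<in>?S. Poly_Mapping.lookup y F * \<phi> F)"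
    by (simp add: lookup_add distrib_right sum.distrib)
  also have "\<dots> = linext \<phi> x + linext \<phi> y"
    by (subst (1 2) linext_superset[of ?S]) auto
  finally show ?thesis .
qed

lemma linext_zero[simp]: "linext \<phi> 0 = 0"
  by (simp add: linext_def)

lemma linext_single[simp]: "linext \<phi> (Poly_Mapping.single k c) = c * \<phi> k"
  by (subst linext_superset[of "{k}"]) auto

lemma linext_sum: "linext \<phi> (sum f I) = (\<Sum>i\<in>I. linext \<phi> (f i))"
  by (induction I rule: infinite_finite_induct) (auto simp: linext_add)

lemma lookup_sc[simp]: "Poly_Mapping.lookup (sc c x) k = c * Poly_Mapping.lookup x k"
  unfolding sc_def by (simp add: map.rep_eq when_def)

lemma keys_sc: "Poly_Mapping.keys (sc c x) \<subseteq> Poly_Mapping.keys x"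
  by (auto simp: in_keys_iff)

lemma linext_sc: "linext \<phi> (sc c x) = c * linext \<phi> x"
proof -
  have "linext \<phi> (sc c x) = (\<Sum>F\<in>Poly_Mapping.keys x. Poly_Mapping.lookup (sc c x) F * \<phi> F)"
    by (rule linext_superset) (auto simp: keys_sc)
  then show ?thesis by (simp add: linext_def sum_distrib_left mult.assoc)
qed

lemma linext_cong: "(\<And>F. F \<in> Poly_Mapping.keys x \<Longrightarrow> \<phi> F = \<psi> F) \<Longrightarrow> linext \<phi> x = linext \<psi> x"
  unfolding linext_def by (rule sum.cong) auto

lemma linext_fun_add: "linext (\<lambda>F. \<phi> F + \<psi> F) x = linext \<phi> x + linext \<psi> x"
  unfolding linext_def by (simp add: distrib_left sum.distrib)

lemma linext_fun_mult_left: "linext (\<lambda>F. c * \<phi> F) x = c * linext \<phi> x"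
  unfolding linext_def by (subst sum_distrib_left) (rule sum.cong, auto simp: mult_ac)

lemma linext_fun_mult_right: "linext (\<lambda>F. \<phi> F * c) x = linext \<phi> x * c"
  using linext_fun_mult_left[of c \<phi> x] by (simp add: mult.commute)

lemma linext_fun_sum: "linext (\<lambda>F. \<Sum>i\<in>I. \<phi> i F) x = (\<Sum>i\<in>I. linext (\<phi> i) x)"
  unfolding linext_def by (simp add: sum_distrib_left sum.swap[of _ I])

lemma linext_fun_zero[simp]: "linext (\<lambda>F. 0) x = 0"
  unfolding linext_def by simp

lemma linext_swap: "linext (\<lambda>F. linext (\<lambda>G. \<phi> F G) y) x = linext (\<lambda>G. linext (\<lambda>F. \<phi> F G) x) y"
  unfolding linext_def by (simp add: sum_distrib_left sum.swap[of _ "Poly_Mapping.keys x"] algebra_simps)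

lemma linext_indicator: "linext (\<lambda>G. if G = a then 1 else 0) x = Poly_Mapping.lookup x a"
  by (subst linext_superset[of "insert a (Poly_Mapping.keys x)"]) (auto simp: if_distrib cong: if_cong)

lemma linext_bas[simp]: "linext \<phi> (bas F) = \<phi> F"
  by (simp add: bas_def)

lemma poly_mapping_sum_single:
  "x = (\<Sum>F\<in>Poly_Mapping.keys x. Poly_Mapping.single F (Poly_Mapping.lookup x F))"
  by (rule poly_mapping_eqI) (auto simp: lookup_sum lookup_single when_def in_keys_iff)

lemma linext_eqI: "(\<And>\<phi>. linext \<phi> x = linext \<phi> y) \<Longrightarrow> x = y"
proof (rule poly_mapping_eqI)
  fix k assume "\<And>\<phi>. linext \<phi> x = linext \<phi> y"
  from this[of "\<lambda>G. if G = k then 1 else 0"] show "Poly_Mapping.lookup x k = Poly_Mapping.lookup y k"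
    by (simp add: linext_indicator)
qed

lemma lookup_bas: "Poly_Mapping.lookup (bas F) G = (if F = G then 1 else 0)"
  by (simp add: bas_def lookup_single when_def)

lemma sc_bas: "sc (c::'k::field) (bas F) = Poly_Mapping.single F c"
  by (rule linext_eqI) (simp add: linext_sc)

definition push_forward :: "('a \<Rightarrow> 'b) \<Rightarrow> ('a \<Rightarrow>\<^sub>0 'k::comm_ring_1) \<Rightarrow> ('b \<Rightarrow>\<^sub>0 'k)" where
  "push_forward h w = (\<Sum>p\<in>Poly_Mapping.keys w. Poly_Mapping.single (h p) (Poly_Mapping.lookup w p))"

lemma linext_push_forward: "linext \<phi> (push_forward h w) = linext (\<lambda>p. \<phi> (h p)) w"
  unfolding push_forward_def linext_sum linext_single by (simp add: linext_def)

lemma push_forward_add: "push_forward h (x + y) = push_forward h x + push_forward h y"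
  by (rule linext_eqI) (simp add: linext_push_forward linext_add)

lemma push_forward_single[simp]: "push_forward h (Poly_Mapping.single k c) = Poly_Mapping.single (h k) c"
  by (rule linext_eqI) (simp add: linext_push_forward)

lemma push_forward_sum: "push_forward h (sum f I) = (\<Sum>i\<in>I. push_forward h (f i))"
  by (rule linext_eqI) (simp add: linext_push_forward linext_sum)

section \<open>Weights and cuts of planar forests\<close>

lemma wt_f_append[simp]: "wt_f (xs @ ys) = wt_f xs + wt_f ys"
  by (induction xs) auto

lemma wt_t_gt_0: "wt_t t > 0" by (cases t) auto

lemma wt_f_eq_0_iff[simp]: "wt_f F = 0 \<longleftrightarrow> F = []"
  using wt_t_gt_0 by (cases F) auto

lemma wt_f_gt_0_iff[simp]: "wt_f F > 0 \<longleftrightarrow> F \<noteq> []"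
  by (simp only: neq0_conv[symmetric] wt_f_eq_0_iff)

text \<open>\<open>take_vertices k H\<close> is the subforest spanned by the first \<open>k\<close> vertices of \<open>H\<close>
  in postorder, \<open>drop_vertices k H\<close> the subforest spanned by the others.\<close>

fun take_vertices :: "nat \<Rightarrow> forest \<Rightarrow> forest" where
  "take_vertices k [] = []"
| "take_vertices k (Node F # ts) =
    (if k \<le> wt_f F then take_vertices k F else Node F # take_vertices (k - Suc (wt_f F)) ts)"

fun drop_vertices :: "nat \<Rightarrow> forest \<Rightarrow> forest" where
  "drop_vertices k [] = []"
| "drop_vertices k (Node F # ts) =
    (if k \<le> wt_f F then Node (drop_vertices k F) # ts else drop_vertices (k - Suc (wt_f F)) ts)"

lemma wt_take_vertices[simp]: "wt_f (take_vertices k H) = min k (wt_f H)"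
  by (induction k H rule: take_vertices.induct) auto

lemma wt_drop_vertices[simp]: "wt_f (drop_vertices k H) = wt_f H - k"
  by (induction k H rule: drop_vertices.induct) auto

lemma take_vertices_0[simp]: "take_vertices 0 H = []"
  by (induction "0::nat" H rule: take_vertices.induct) auto

lemma drop_vertices_0[simp]: "drop_vertices 0 H = H"
  by (induction "0::nat" H rule: drop_vertices.induct) auto

lemma take_vertices_all: "wt_f H \<le> k \<Longrightarrow> take_vertices k H = H"
  by (induction k H rule: take_vertices.induct) auto

lemma drop_vertices_all: "wt_f H \<le> k \<Longrightarrow> drop_vertices k H = []"
  by (induction k H rule: drop_vertices.induct) auto

lemma take_vertices_append: "take_vertices k (F1 @ F2) =
    (if k \<le> wt_f F1 then take_vertices k F1 else F1 @ take_vertices (k - wt_f F1) F2)"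
proof (induction F1 arbitrary: k)
  case Nil then show ?case by simp
next
  case (Cons t F1)
  obtain F where t: "t = Node F" by (cases t)
  show ?case using Cons by (auto simp: t take_vertices_all)
qed

lemma drop_vertices_append: "drop_vertices k (F1 @ F2) =
    (if k \<le> wt_f F1 then drop_vertices k F1 @ F2 else drop_vertices (k - wt_f F1) F2)"
proof (induction F1 arbitrary: k)
  case Nil then show ?case by simp
next
  case (Cons t F1)
  obtain F where t: "t = Node F" by (cases t)
  show ?case using Cons by (auto simp: t drop_vertices_all)
qed

lemma take_vertices_take_vertices: "a \<le> b \<Longrightarrow> take_vertices a (take_vertices b H) = take_vertices a H"
  by (induction b H arbitrary: a rule: take_vertices.induct) auto

lemma drop_vertices_drop_vertices: "drop_vertices a (drop_vertices b H) = drop_vertices (a + b) H"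
  by (induction b H arbitrary: a rule: drop_vertices.induct) auto

lemma take_vertices_drop_vertices:
  "take_vertices a (drop_vertices b H) = drop_vertices b (take_vertices (a + b) H)"
  by (induction b H arbitrary: a rule: drop_vertices.induct)
     (auto simp: take_vertices_all drop_vertices_all)

lemma drop_vertices_eq_Nil_iff: "drop_vertices i F = [] \<longleftrightarrow> wt_f F \<le> i"
  using wt_f_eq_0_iff[of "drop_vertices i F"] by simp

lemma take_vertices_eq_Nil_iff: "take_vertices i F = [] \<longleftrightarrow> i = 0 \<or> F = []"
  using wt_f_eq_0_iff[of "take_vertices i F"] wt_f_eq_0_iff[of F]
  by (auto simp: min_def split: if_splits)

section \<open>The pairing relation on forests\<close>

text \<open>\<open>\<langle>F, H\<rangle>\<close> is \<open>1\<close> if \<open>paired F H\<close> and \<open>0\<close> otherwise; the last two equations are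
  axioms (3) and (2) evaluated on basis forests.\<close>

fun paired :: "forest \<Rightarrow> forest \<Rightarrow> bool" where
  "paired [] H = (H = [])"
| "paired [Node F] H = (case H of [] \<Rightarrow> False | t # H' \<Rightarrow> t = Node [] \<and> paired F H')"
| "paired (t # s # ss) H = (wt_f (s # ss) \<le> wt_f H
      \<and> paired (s # ss) (take_vertices (wt_f (s # ss)) H) \<and> paired [t] (drop_vertices (wt_f (s # ss)) H))"

lemma paired_wt: "paired F H \<Longrightarrow> wt_f F = wt_f H"
proof (induction F H rule: paired.induct)
  case (2 F H) then show ?case by (cases H) auto
next
  case (3 t s ss H)
  define k where "k = wt_f (s # ss)"
  have a: "k \<le> wt_f H" "paired (s # ss) (take_vertices k H)" "paired [t] (drop_vertices k H)"
    using 3(3) unfolding k_def by auto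
  have "k = min k (wt_f H)" using 3(1) a unfolding k_def by auto
  moreover have "wt_t t = wt_f H - k" using 3(2) a unfolding k_def by auto
  ultimately show ?case using a(1) unfolding k_def by simp
qed auto

lemma paired_Cons: "paired (t # ts) H \<longleftrightarrow>
    wt_f ts \<le> wt_f H \<and> paired ts (take_vertices (wt_f ts) H) \<and> paired [t] (drop_vertices (wt_f ts) H)"
  by (cases ts) auto

lemma paired_Nil_right[simp]: "paired H [] \<longleftrightarrow> H = []"
proof
  assume "paired H []" from paired_wt[OF this] show "H = []" by simp
qed simp

lemma paired_append_left: "paired (F1 @ F2) H \<longleftrightarrow>
    wt_f F2 \<le> wt_f H \<and> paired F2 (take_vertices (wt_f F2) H) \<and> paired F1 (drop_vertices (wt_f F2) H)"
proof (induction F1 arbitrary: H)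
  case Nil
  then show ?case
    using paired_wt[of F2 H] by (auto simp: take_vertices_all drop_vertices_all drop_vertices_eq_Nil_iff)
next
  case (Cons t F1)
  define w1 where "w1 = wt_f F1"
  define w2 where "w2 = wt_f F2"
  have "paired ((t # F1) @ F2) H \<longleftrightarrow> w1 + w2 \<le> wt_f H
      \<and> paired (F1 @ F2) (take_vertices (w1 + w2) H) \<and> paired [t] (drop_vertices (w1 + w2) H)"
    by (simp only: append_Cons paired_Cons[of t "F1 @ F2"] wt_f_append w1_def w2_def)
  also have "\<dots> \<longleftrightarrow> w1 + w2 \<le> wt_f H \<and> paired F2 (take_vertices w2 H)
      \<and> paired F1 (drop_vertices w2 (take_vertices (w1 + w2) H)) \<and> paired [t] (drop_vertices (w1 + w2) H)"
    using Cons.IH[of "take_vertices (w1 + w2) H"] by (auto simp: take_vertices_take_vertices w2_def)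
  also have "\<dots> \<longleftrightarrow> w2 \<le> wt_f H \<and> paired F2 (take_vertices w2 H) \<and> w1 \<le> wt_f (drop_vertices w2 H)
      \<and> paired F1 (take_vertices w1 (drop_vertices w2 H)) \<and> paired [t] (drop_vertices w1 (drop_vertices w2 H))"
    by (simp add: take_vertices_drop_vertices drop_vertices_drop_vertices add.commute) linarith
  also have "\<dots> \<longleftrightarrow> w2 \<le> wt_f H \<and> paired F2 (take_vertices w2 H) \<and> paired (t # F1) (drop_vertices w2 H)"
    by (simp only: paired_Cons[of t F1] w1_def)
  finally show ?case unfolding w2_def .
qed

lemma paired_Node_right: "paired H [Node F] \<longleftrightarrow> (\<exists>H'. H = Node [] # H' \<and> paired H' F)"
proof (cases H)
  case (Cons t ts)
  define k where "k = wt_f ts"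
  have paired_t: "paired [t] [Node X] \<longleftrightarrow> t = Node [] \<and> X = []" for X
    by (cases t) auto
  show ?thesis
  proof (cases "k \<le> wt_f F")
    case True
    have "paired H [Node F] \<longleftrightarrow> paired ts (take_vertices k F) \<and> t = Node [] \<and> wt_f F \<le> k"
      using True by (simp add: Cons paired_Cons[of t ts] paired_t drop_vertices_eq_Nil_iff k_def)
    also have "\<dots> \<longleftrightarrow> t = Node [] \<and> paired ts F"
      using True paired_wt[of ts F] by (auto simp: take_vertices_all k_def)
    finally show ?thesis using Cons by simp
  next
    case False
    then have "\<not> paired ts F" using paired_wt k_def by fastforce
    then show ?thesis using False by (simp add: Cons paired_Cons[of t ts] k_def)
  qed
qed simp

lemma paired_Cons_append_right_short:
  assumes t: "\<And>A B. paired [t] (A @ B) \<longleftrightarrow> wt_f B \<le> wt_t t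
      \<and> paired (take_vertices (wt_f B) [t]) B \<and> paired (drop_vertices (wt_f B) [t]) A"
    and short: "wt_f ts \<le> wt_f F1" and wt: "wt_t t + wt_f ts = wt_f F1 + wt_f F2"
  shows "paired (t # ts) (F1 @ F2) \<longleftrightarrow>
    paired (take_vertices (wt_f F2) (t # ts)) F2 \<and> paired (drop_vertices (wt_f F2) (t # ts)) F1"
proof -
  let ?k = "wt_f ts" and ?w = "wt_f F2"
  have w: "?w \<le> wt_t t" using short wt by simp
  have "paired (t # ts) (F1 @ F2) \<longleftrightarrow>
      paired ts (take_vertices ?k F1) \<and> paired [t] (drop_vertices ?k F1 @ F2)"
    using short by (simp add: paired_Cons[of t ts] take_vertices_append drop_vertices_append)
  also have "\<dots> \<longleftrightarrow> paired ts (take_vertices ?k F1)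
      \<and> paired (take_vertices ?w [t]) F2 \<and> paired (drop_vertices ?w [t]) (drop_vertices ?k F1)"
    using t w by simp
  also have "\<dots> \<longleftrightarrow> paired (take_vertices ?w [t]) F2 \<and> paired (drop_vertices ?w [t] @ ts) F1"
    using short by (auto simp: paired_append_left)
  also have "\<dots> \<longleftrightarrow> paired (take_vertices ?w (t # ts)) F2 \<and> paired (drop_vertices ?w (t # ts)) F1"
    using w take_vertices_append[of ?w "[t]" ts] drop_vertices_append[of ?w "[t]" ts] by simp
  finally show ?thesis .
qed

lemma paired_Cons_append_right_long:
  assumes ts: "\<And>A B. paired ts (A @ B) \<longleftrightarrow> wt_f B \<le> wt_f ts
      \<and> paired (take_vertices (wt_f B) ts) B \<and> paired (drop_vertices (wt_f B) ts) A"
    and long: "wt_f F1 < wt_f ts" and wt: "wt_t t + wt_f ts = wt_f F1 + wt_f F2"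
  shows "paired (t # ts) (F1 @ F2) \<longleftrightarrow>
    paired (take_vertices (wt_f F2) (t # ts)) F2 \<and> paired (drop_vertices (wt_f F2) (t # ts)) F1"
proof -
  define j where "j = wt_f ts - wt_f F1"
  have j: "j \<le> wt_f ts" "wt_f F2 = wt_t t + j" "wt_t t < wt_f F2"
    using long wt unfolding j_def by linarith+
  have "paired (t # ts) (F1 @ F2) \<longleftrightarrow>
      paired ts (F1 @ take_vertices j F2) \<and> paired [t] (drop_vertices j F2)"
    using long wt by (simp add: paired_Cons[of t ts] take_vertices_append drop_vertices_append j_def)
  also have "\<dots> \<longleftrightarrow> paired (take_vertices j ts) (take_vertices j F2)
      \<and> paired (drop_vertices j ts) F1 \<and> paired [t] (drop_vertices j F2)"
    using ts[of F1 "take_vertices j F2"] j by (simp add: min_def)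
  also have "\<dots> \<longleftrightarrow> paired ([t] @ take_vertices j ts) F2 \<and> paired (drop_vertices j ts) F1"
    using j paired_append_left[of "[t]" "take_vertices j ts" F2] by (auto simp: min_def)
  also have "\<dots> \<longleftrightarrow> paired (take_vertices (wt_f F2) (t # ts)) F2 \<and> paired (drop_vertices (wt_f F2) (t # ts)) F1"
    using j take_vertices_append[of "wt_f F2" "[t]" ts] drop_vertices_append[of "wt_f F2" "[t]" ts] by simp
  finally show ?thesis .
qed

lemma paired_append_right: "paired H (F1 @ F2) \<longleftrightarrow>
    wt_f F2 \<le> wt_f H \<and> paired (take_vertices (wt_f F2) H) F2 \<and> paired (drop_vertices (wt_f F2) H) F1"
proof (induction "wt_f H" arbitrary: H F1 F2 rule: less_induct)
  case less
  consider "H = []" | G where "H = [Node G]" | t ts where "H = t # ts" "ts \<noteq> []"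
    by (metis list.exhaust ptree.exhaust)
  then show ?case
  proof cases
    case 1
    then show ?thesis by auto
  next
    case (2 G)
    have IH: "paired G (F1' @ F2) \<longleftrightarrow> wt_f F2 \<le> wt_f G
        \<and> paired (take_vertices (wt_f F2) G) F2 \<and> paired (drop_vertices (wt_f F2) G) F1'" for F1'
      using less 2 by simp
    show ?thesis
    proof (cases F1)
      case Nil
      have "wt_f H = wt_f F2" if "paired (drop_vertices (wt_f F2) H) []" "wt_f F2 \<le> wt_f H"
        using that paired_Nil_right drop_vertices_eq_Nil_iff by (metis le_antisym)
      then show ?thesis using Nil paired_wt[of H F2] by (auto simp: take_vertices_all drop_vertices_all)
    next
      case (Cons u F1')
      then show ?thesis using IH 2 by (cases "wt_f F2 \<le> wt_f G") auto
    qed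
  next
    case (3 t ts)
    have wt_less: "wt_f [t] < wt_f H" "wt_f ts < wt_f H"
      using 3 wt_t_gt_0[of t] by simp_all
    show ?thesis
    proof (cases "wt_t t + wt_f ts = wt_f F1 + wt_f F2")
      case wt: True
      have "paired (t # ts) (F1 @ F2) \<longleftrightarrow>
          paired (take_vertices (wt_f F2) (t # ts)) F2 \<and> paired (drop_vertices (wt_f F2) (t # ts)) F1"
      proof (cases "wt_f ts \<le> wt_f F1")
        case True
        have "paired [t] (A @ B) \<longleftrightarrow> wt_f B \<le> wt_t t
            \<and> paired (take_vertices (wt_f B) [t]) B \<and> paired (drop_vertices (wt_f B) [t]) A" for A B
          using less(1)[OF wt_less(1)] by simp
        from paired_Cons_append_right_short[OF this True wt] show ?thesis .
      next
        case False
        then show ?thesis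
          using paired_Cons_append_right_long[OF less(1)[OF wt_less(2)] _ wt] by simp
      qed
      then show ?thesis using 3 wt by simp
    next
      case False
      then have "\<not> paired H (F1 @ F2)" using paired_wt 3 by fastforce
      moreover have "\<not> paired (drop_vertices (wt_f F2) H) F1" if "wt_f F2 \<le> wt_f H"
        using paired_wt that False 3 by fastforce
      ultimately show ?thesis by blast
    qed
  qed
qed

lemma paired_sym: "paired H F \<longleftrightarrow> paired F H"
proof (induction F H rule: paired.induct)
  case (2 F H)
  then show ?case by (cases H) (auto simp: paired_Node_right)
next
  case (3 t s ss H)
  have "paired H ([t] @ (s # ss)) \<longleftrightarrow> paired (t # s # ss) H"
    using 3 by (simp only: paired_append_right paired.simps(3))
  then show ?case by simp
qed simp

section \<open>Subtree-size sequences\<close>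

text \<open>\<open>size_seq F\<close> lists the subtree sizes of the vertices of \<open>F\<close>; \<open>dual_size_seq H\<close>
  lists, in postorder, the size of each vertex together with the subtrees of its younger
  siblings. \<open>rotate_forest\<close> exchanges the roles of first child and next sibling.\<close>

fun size_seq :: "forest \<Rightarrow> nat list" where
  "size_seq [] = []"
| "size_seq (Node T # ts) = size_seq ts @ Suc (wt_f T) # size_seq T"

fun dual_size_seq :: "forest \<Rightarrow> nat list" where
  "dual_size_seq [] = []"
| "dual_size_seq (Node A # B) = dual_size_seq A @ Suc (wt_f B) # dual_size_seq B"

fun rotate_forest :: "forest \<Rightarrow> forest" where
  "rotate_forest [] = []"
| "rotate_forest (Node T # ts) = Node (rotate_forest ts) # rotate_forest T"

lemma length_size_seq[simp]: "length (size_seq F) = wt_f F"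
  by (induction F rule: size_seq.induct) auto

lemma length_dual_size_seq[simp]: "length (dual_size_seq F) = wt_f F"
  by (induction F rule: dual_size_seq.induct) auto

lemma wt_rotate_forest[simp]: "wt_f (rotate_forest F) = wt_f F"
  by (induction F rule: rotate_forest.induct) auto

lemma dual_size_seq_rotate_forest: "dual_size_seq (rotate_forest F) = size_seq F"
  by (induction F rule: rotate_forest.induct) auto

lemma dual_size_seq_bound: "p < wt_f H \<Longrightarrow> dual_size_seq H ! p \<le> wt_f H - p"
proof (induction H arbitrary: p rule: dual_size_seq.induct)
  case (2 A B)
  consider "p < wt_f A" | "p = wt_f A" | "p > wt_f A" by linarith
  then show ?case
  proof cases
    case 1
    then have "dual_size_seq A ! p \<le> wt_f A - p" using 2(1) by simp
    then show ?thesis using 1 by (simp add: nth_append_Cons)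
  next
    case 2
    then show ?thesis by (simp add: nth_append_Cons)
  next
    case 3
    define q where "q = p - Suc (wt_f A)"
    have q: "q < wt_f B" using 3 "2.prems" q_def by simp
    have "dual_size_seq B ! q \<le> wt_f B - q" using "2.IH"(2)[OF q] .
    then show ?thesis using 3 q q_def by (simp add: nth_append_Cons)
  qed
qed simp

lemma size_seq_bound: "p < wt_f F \<Longrightarrow> size_seq F ! p \<le> wt_f F - p"
  using dual_size_seq_bound[of p "rotate_forest F"] by (simp add: dual_size_seq_rotate_forest)

lemma dual_size_seq_drop_vertices: "dual_size_seq (drop_vertices k H) = drop k (dual_size_seq H)"
proof (induction k H rule: drop_vertices.induct)
  case (2 k F ts)
  show ?case
  proof (cases "k \<le> wt_f F")
    case True then show ?thesis using 2 by simp
  next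
    case False
    then have "drop k (dual_size_seq F @ Suc (wt_f ts) # dual_size_seq ts) =
        drop (k - Suc (wt_f F)) (dual_size_seq ts)"
      by (simp add: drop_append) (metis Suc_diff_Suc drop_Suc_Cons not_le)
    then show ?thesis using 2 False by simp
  qed
qed simp

lemma dual_size_seq_take_vertices:
  "p < min k (wt_f H) \<Longrightarrow> dual_size_seq (take_vertices k H) ! p = min (dual_size_seq H ! p) (k - p)"
proof (induction k H arbitrary: p rule: take_vertices.induct)
  case (2 k F ts)
  show ?case
  proof (cases "k \<le> wt_f F")
    case True
    then have "p < wt_f F" using 2(3) by simp
    then show ?thesis using 2 True by (simp add: nth_append_Cons)
  next
    case False
    define j where "j = k - Suc (wt_f F)"
    have take_vertices: "take_vertices k (Node F # ts) = Node F # take_vertices j ts"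
      using False j_def by simp
    consider "p < wt_f F" | "p = wt_f F" | "p > wt_f F" by linarith
    then show ?thesis
    proof cases
      case 1
      have "dual_size_seq F ! p \<le> wt_f F - p" using dual_size_seq_bound 1 by simp
      then show ?thesis using 1 False take_vertices by (simp add: nth_append_Cons)
    next
      case 2
      then show ?thesis using False take_vertices j_def by (simp add: nth_append_Cons)
    next
      case 3
      define q where "q = p - Suc (wt_f F)"
      have pk: "p < k" "p < Suc (wt_f F + wt_f ts)" using "2.prems" by auto
      have "q < j" "q < wt_f ts" unfolding q_def j_def using pk 3 by linarith+
      then have q: "q < min j (wt_f ts)" by simp
      have "dual_size_seq (take_vertices j ts) ! q = min (dual_size_seq ts ! q) (j - q)"
        using "2.IH"(2)[OF False, folded j_def, OF q] .
      moreover have "j - q = k - p" using 3 q_def j_def False by simp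
      ultimately show ?thesis using 3 q_def take_vertices by (simp add: nth_append_Cons)
    qed
  qed
qed simp

lemma dual_size_seq_head: "H \<noteq> [] \<Longrightarrow> dual_size_seq H ! 0 = wt_f H \<longleftrightarrow> (\<exists>H'. H = Node [] # H')"
proof -
  assume "H \<noteq> []"
  then obtain A B where H: "H = Node A # B" by (metis list.exhaust ptree.exhaust)
  show ?thesis
  proof (cases "A = []")
    case True then show ?thesis using H by simp
  next
    case False
    then have "wt_f A > 0" using wt_f_eq_0_iff by (metis gr0I)
    then have "dual_size_seq A ! 0 \<le> wt_f A" using dual_size_seq_bound[of 0 A] by simp
    then show ?thesis using H False \<open>wt_f A > 0\<close> by (simp add: nth_append)
  qed
qed

lemma size_seq_Cons: "size_seq (t # ts) = size_seq ts @ size_seq [t]"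
  by (cases t) simp

lemma paired_iff_size_seq: "paired F H \<longleftrightarrow> list_all2 (\<le>) (size_seq F) (dual_size_seq H)"
proof (induction F H rule: paired.induct)
  case (1 H) then show ?case by (auto simp: list_all2_conv_all_nth)
next
  case (2 T H)
  show ?case
  proof
    assume "paired [Node T] H"
    then obtain H' where H: "H = Node [] # H'" "paired T H'" by (cases H) auto
    then have "wt_f T = wt_f H'" using paired_wt by simp
    then show "list_all2 (\<le>) (size_seq [Node T]) (dual_size_seq H)"
      using H 2 by (simp add: list_all2_Cons)
  next
    assume a: "list_all2 (\<le>) (size_seq [Node T]) (dual_size_seq H)"
    then have wt: "wt_f H = Suc (wt_f T)" by (auto dest: list_all2_lengthD)
    have "Suc (wt_f T) \<le> dual_size_seq H ! 0"
      using a wt by (auto simp: list_all2_conv_all_nth)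
    then obtain H' where H: "H = Node [] # H'"
      using dual_size_seq_bound[of 0 H] dual_size_seq_head[of H] wt by force
    then have "list_all2 (\<le>) (size_seq T) (dual_size_seq H')" using a by (simp add: list_all2_Cons)
    then show "paired [Node T] H" using 2 H by simp
  qed
next
  case (3 t s ss H)
  define ts where "ts = s # ss"
  define k where "k = wt_f ts"
  have "paired (t # s # ss) H \<longleftrightarrow> k \<le> wt_f H
      \<and> list_all2 (\<le>) (size_seq ts) (dual_size_seq (take_vertices k H))
      \<and> list_all2 (\<le>) (size_seq [t]) (dual_size_seq (drop_vertices k H))"
    using 3 unfolding ts_def k_def by simp
  also have "\<dots> \<longleftrightarrow> k \<le> wt_f H \<and> list_all2 (\<le>) (size_seq ts) (take k (dual_size_seq H))
      \<and> list_all2 (\<le>) (size_seq [t]) (drop k (dual_size_seq H))"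
  proof (cases "k \<le> wt_f H")
    case True
    then have "list_all2 (\<le>) (size_seq ts) (dual_size_seq (take_vertices k H))
        \<longleftrightarrow> list_all2 (\<le>) (size_seq ts) (take k (dual_size_seq H))"
      using dual_size_seq_take_vertices[of _ k H] size_seq_bound[of _ ts]
      by (auto simp: list_all2_conv_all_nth k_def)
    then show ?thesis by (simp add: dual_size_seq_drop_vertices)
  qed simp
  also have "\<dots> \<longleftrightarrow> list_all2 (\<le>) (size_seq (t # s # ss)) (dual_size_seq H)"
    using list_all2_append_left_take_drop[of _ "size_seq ts" "size_seq [t]" "dual_size_seq H"]
      size_seq_Cons[of t ts] k_def ts_def
    by simp
  finally show ?case .
qed

lemma size_seq_Node_Cons_nth_eq_iff:
  "p \<le> wt_f ts \<Longrightarrow> size_seq (Node T # ts) ! p = wt_f (Node T # ts) - p \<longleftrightarrow> p = wt_f ts"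
  using size_seq_bound[of p ts] by (auto simp: nth_append_Cons)

lemma size_seq_inj: "size_seq F = size_seq G \<Longrightarrow> F = G"
proof (induction F arbitrary: G rule: size_seq.induct)
  case 1
  then show ?case by (metis length_size_seq list.size(3) wt_f_eq_0_iff)
next
  case (2 T ts G)
  then have "G \<noteq> []" by (cases G) auto
  then obtain T' ts' where G: "G = Node T' # ts'" by (metis list.exhaust ptree.exhaust)
  have seq: "size_seq (Node T # ts) = size_seq (Node T' # ts')" using 2(3) G by simp
  have wt: "wt_f (Node T # ts) = wt_f (Node T' # ts')" using arg_cong[OF seq, of length] by simp
  have "wt_f ts = wt_f ts'"
    using size_seq_Node_Cons_nth_eq_iff[of "wt_f ts" ts T] size_seq_Node_Cons_nth_eq_iff[of "wt_f ts'" ts' T']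
      size_seq_Node_Cons_nth_eq_iff[of "wt_f ts" ts' T'] size_seq_Node_Cons_nth_eq_iff[of "wt_f ts'" ts T]
    unfolding seq wt by (metis nat_le_linear)
  then have "size_seq ts = size_seq ts'" "size_seq T = size_seq T'" using seq by auto
  then show ?case using 2(1,2) G by simp
qed

lemma paired_rotate_forest_iff:
  "paired F' (rotate_forest F) \<longleftrightarrow> list_all2 (\<le>) (size_seq F') (size_seq F)"
  by (simp add: paired_iff_size_seq dual_size_seq_rotate_forest)

lemma paired_rotate_forest_self[simp]: "paired F (rotate_forest F)"
  by (simp add: paired_rotate_forest_iff list_all2_refl)

lemma paired_rotate_forest_triangular:
  assumes "paired F' (rotate_forest F)" and "sum_list (size_seq F) \<le> sum_list (size_seq F')"
  shows "F' = F"
  using list_all2_le_sum_list_eq[of "size_seq F'" "size_seq F"] size_seq_inj assms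
  by (simp add: paired_rotate_forest_iff)

lemma lmul2_push_forward: "lmul2 x w = push_forward (\<lambda>(a, b). (x @ a, b)) w"
  unfolding lmul2_def push_forward_def by (simp add: case_prod_beta)

lemma rmul2_push_forward: "rmul2 w y = push_forward (\<lambda>(a, b). (a, b @ y)) w"
  unfolding rmul2_def push_forward_def by (simp add: case_prod_beta)

lemma idBplus_push_forward: "idBplus w = push_forward (\<lambda>(a, b). (a, [Node b])) w"
  unfolding idBplus_def push_forward_def by (simp add: case_prod_beta)

lemma linext_mult: "linext \<phi> (mult x y) = linext (\<lambda>F. linext (\<lambda>G. \<phi> (F @ G)) y) x"
  unfolding mult_def linext_sum linext_single linext_def[of _ x] linext_def[of _ y]
  by (rule sum.cong[OF refl]) (simp add: sum_distrib_left mult_ac)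

lemma linext_tens: "linext \<phi> (tens x y) = linext (\<lambda>F. linext (\<lambda>G. \<phi> (F, G)) y) x"
  unfolding tens_def linext_sum linext_single linext_def[of _ x] linext_def[of _ y]
  by (rule sum.cong[OF refl]) (simp add: sum_distrib_left mult_ac)

lemma linext_Delta: "linext \<phi> (Delta z) = linext (\<lambda>H. linext \<phi> (delta_f H)) z"
  unfolding Delta_def linext_sum linext_sc linext_def[of _ z] ..

lemma linext_Bplus: "linext \<phi> (Bplus x) = linext (\<lambda>F. \<phi> [Node F]) x"
  unfolding Bplus_def linext_sum linext_single linext_def[of _ x] ..

lemma linext_gamma_f:
  "linext \<phi> (gamma_f G) = (case G of [] \<Rightarrow> 0 | t # ts \<Rightarrow> if t = Node [] then \<phi> ts else 0)"
  by (cases G) auto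

lemma linext_gamma: "linext \<phi> (gamma y) = linext (\<lambda>G. linext \<phi> (gamma_f G)) y"
  unfolding gamma_def linext_sum linext_sc linext_def[of _ y] ..

lemma eps_linext: "eps x = linext (\<lambda>G. if G = [] then 1 else 0) x"
  by (simp add: eps_def linext_indicator)

lemma pair2_linext: "pair2 B u v =
    linext (\<lambda>p. linext (\<lambda>q. B (bas (fst p)) (bas (fst q)) * B (bas (snd p)) (bas (snd q))) v) u"
  unfolding pair2_def linext_def
  by (simp add: case_prod_beta sum_distrib_left mult_ac)

lemma bas_Node: "bas [Node T] = Bplus (bas T)"
  by (rule linext_eqI) (simp add: linext_Bplus)

lemma gamma_bas: "gamma (bas G) = gamma_f G"
  by (rule linext_eqI) (simp add: linext_gamma)

lemma bas_Cons: "bas (t # ts) = mult (bas [t]) (bas ts)"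
  by (rule linext_eqI) (simp add: linext_mult)

lemma tens_bas: "tens (bas a) (bas b) = Poly_Mapping.single (a, b) 1"
  by (rule linext_eqI) (simp add: linext_tens)

lemma Delta_bas: "Delta (bas H) = delta_f H"
  by (rule linext_eqI) (simp add: linext_Delta)

lemma delta_cuts:
  "delta_t t = (\<Sum>k\<le>wt_t t. Poly_Mapping.single (take_vertices k [t], drop_vertices k [t]) (1::'k::field))"
  "delta_f F = (\<Sum>k\<le>wt_f F. Poly_Mapping.single (take_vertices k F, drop_vertices k F) (1::'k::field))"
proof (induction t and F rule: delta_t_delta_f.induct)
  case (1 F)
  have "idBplus (delta_f F :: 'k alg2) =
      (\<Sum>k\<le>wt_f F. Poly_Mapping.single (take_vertices k [Node F], drop_vertices k [Node F]) 1)"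
    unfolding 1 idBplus_push_forward push_forward_sum by (intro sum.cong) auto
  then show ?case by (simp add: take_vertices_all drop_vertices_all)
next
  case 2
  then show ?case by simp
next
  case (3 t ts)
  let ?cut = "\<lambda>k. Poly_Mapping.single (take_vertices k (t # ts), drop_vertices k (t # ts)) (1::'k)"
  have "t # ts = [t] @ ts" by simp
  note cuts_Cons = take_vertices_append[of _ "[t]" ts, folded this] drop_vertices_append[of _ "[t]" ts, folded this]
  have "rmul2 (delta_t t) ts = (\<Sum>k\<le>wt_t t. ?cut k)"
    unfolding 3(2) rmul2_push_forward push_forward_sum by (intro sum.cong) (simp_all add: cuts_Cons)
  moreover have "lmul2 [t] (delta_f ts) = Poly_Mapping.single ([t], ts) 1 + (\<Sum>j<wt_f ts. ?cut (wt_t t + Suc j))"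
    unfolding 3(1) lmul2_push_forward push_forward_sum sum_atMost_shift0
    by (simp add: push_forward_add push_forward_sum cuts_Cons)
  ultimately have "delta_f (t # ts) = (\<Sum>k\<le>wt_t t + wt_f ts. ?cut k)"
    unfolding sum_atMost_add by simp
  then show ?case by simp
qed

lemma linext_delta_f:
  "linext \<psi> (delta_f H :: 'k::field alg2) = (\<Sum>k\<le>wt_f H. \<psi> (take_vertices k H, drop_vertices k H))"
  unfolding delta_cuts linext_sum by simp

section \<open>Existence and uniqueness of the pairing\<close>

definition tree_pairing :: "'k::field alg \<Rightarrow> 'k alg \<Rightarrow> 'k" where
  "tree_pairing x y = linext (\<lambda>F. linext (\<lambda>G. of_bool (paired F G)) y) x"

lemma tree_pairing_bas: "tree_pairing (bas F) (bas G) = of_bool (paired F G)"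
  by (simp add: tree_pairing_def)

lemma tree_pairing_bas_right: "tree_pairing x (bas G) = linext (\<lambda>F. of_bool (paired F G)) x"
  by (simp add: tree_pairing_def)

lemma tree_pairing_bas_left: "tree_pairing (bas F) y = linext (\<lambda>G. of_bool (paired F G)) y"
  by (simp add: tree_pairing_def)

lemma of_bool_paired_append: "(of_bool (paired (F @ G) H) :: 'k::comm_ring_1) =
    (\<Sum>k\<le>wt_f H. of_bool (paired G (take_vertices k H)) * of_bool (paired F (drop_vertices k H)))"
proof -
  have other_cut: "\<not> paired G (take_vertices k H)" if "k \<le> wt_f H" "k \<noteq> wt_f G" for k
    using paired_wt[of G "take_vertices k H"] that by auto
  show ?thesis
  proof (cases "wt_f G \<le> wt_f H")
    case True
    then have "(\<Sum>k\<le>wt_f H. of_bool (paired G (take_vertices k H)) * of_bool (paired F (drop_vertices k H)) :: 'k)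
        = of_bool (paired G (take_vertices (wt_f G) H)) * of_bool (paired F (drop_vertices (wt_f G) H))"
      by (intro sum_eq_single) (auto simp: other_cut)
    then show ?thesis using True paired_append_left[of F G H] by (simp add: of_bool_conj)
  next
    case False
    then show ?thesis using paired_append_left[of F G H] other_cut by simp
  qed
qed

lemma bilinear_tree_pairing: "bilinear_form (tree_pairing :: 'k::field alg \<Rightarrow> 'k alg \<Rightarrow> 'k)"
  unfolding bilinear_form_def tree_pairing_def
  by (simp add: linext_add linext_sc linext_fun_add linext_fun_mult_left)

lemma tree_pairing_unit: "tree_pairing (bas []) x = eps x"
  unfolding tree_pairing_bas_left eps_linext by (rule linext_cong) (simp add: of_bool_def)

lemma tree_pairing_mult: "tree_pairing (mult x y) z = pair2 tree_pairing (tens y x) (Delta z)"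
proof -
  let ?cut = "\<lambda>F G H. \<Sum>k\<le>wt_f H. of_bool (paired G (take_vertices k H)) * of_bool (paired F (drop_vertices k H))"
  have "tree_pairing (mult x y) z = linext (\<lambda>F. linext (\<lambda>G. linext (\<lambda>H. ?cut F G H) z) y) x"
    unfolding tree_pairing_def linext_mult of_bool_paired_append ..
  also have "\<dots> = linext (\<lambda>G. linext (\<lambda>F. linext (\<lambda>H. ?cut F G H) z) x) y"
    by (rule linext_swap)
  also have "\<dots> = pair2 tree_pairing (tens y x) (Delta z)"
    unfolding pair2_linext linext_tens linext_Delta linext_delta_f by (simp add: tree_pairing_bas)
  finally show ?thesis .
qed

lemma tree_pairing_Bplus: "tree_pairing (Bplus x) y = tree_pairing x (gamma y)"
proof -
  have "tree_pairing (Bplus x) y = linext (\<lambda>F. linext (\<lambda>G. of_bool (paired [Node F] G)) y) x"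
    unfolding tree_pairing_def linext_Bplus ..
  also have "\<dots> = tree_pairing x (gamma y)"
    unfolding tree_pairing_def linext_gamma
    by (rule linext_cong, rule linext_cong) (auto simp: linext_gamma_f of_bool_def split: list.splits)
  finally show ?thesis .
qed

lemma pairing_axioms_tree_pairing: "pairing_axioms (tree_pairing :: 'k::field alg \<Rightarrow> 'k alg \<Rightarrow> 'k)"
  unfolding pairing_axioms_def
  using bilinear_tree_pairing tree_pairing_unit tree_pairing_mult tree_pairing_Bplus by blast

lemma bilinear_form_zero_left: "bilinear_form B \<Longrightarrow> B 0 y = 0"
  unfolding bilinear_form_def by (metis add_0 add_cancel_right_right)

lemma bilinear_form_zero_right: "bilinear_form B \<Longrightarrow> B y 0 = 0"
  unfolding bilinear_form_def by (metis add_0 add_cancel_right_right)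

lemma bilinear_form_sum_left: "bilinear_form B \<Longrightarrow> B (sum f I) y = (\<Sum>i\<in>I. B (f i) y)"
  by (induction I rule: infinite_finite_induct)
     (auto simp: bilinear_form_zero_left, simp add: bilinear_form_def)

lemma bilinear_form_sum_right: "bilinear_form B \<Longrightarrow> B y (sum f I) = (\<Sum>i\<in>I. B y (f i))"
  by (induction I rule: infinite_finite_induct)
     (auto simp: bilinear_form_zero_right, simp add: bilinear_form_def)

lemma bilinear_form_expand_left: "bilinear_form B \<Longrightarrow> B x y = linext (\<lambda>F. B (bas F) y) x"
proof -
  assume b: "bilinear_form B"
  have "B x y = B (\<Sum>F\<in>Poly_Mapping.keys x. sc (Poly_Mapping.lookup x F) (bas F)) y"
    by (subst poly_mapping_sum_single) (simp add: sc_bas)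
  also have "\<dots> = linext (\<lambda>F. B (bas F) y) x"
    using b unfolding bilinear_form_sum_left[OF b] linext_def bilinear_form_def by simp
  finally show ?thesis .
qed

lemma bilinear_form_expand_right: "bilinear_form B \<Longrightarrow> B y x = linext (\<lambda>F. B y (bas F)) x"
proof -
  assume b: "bilinear_form B"
  have "B y x = B y (\<Sum>F\<in>Poly_Mapping.keys x. sc (Poly_Mapping.lookup x F) (bas F))"
    by (subst poly_mapping_sum_single) (simp add: sc_bas)
  also have "\<dots> = linext (\<lambda>F. B y (bas F)) x"
    using b unfolding bilinear_form_sum_right[OF b] linext_def bilinear_form_def by simp
  finally show ?thesis .
qed

lemma bilinear_form_expand: "bilinear_form B \<Longrightarrow> B x y = linext (\<lambda>F. linext (\<lambda>G. B (bas F) (bas G)) y) x"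
  by (subst bilinear_form_expand_left, assumption, rule linext_cong, rule bilinear_form_expand_right)

lemma pairing_axioms_bas:
  assumes P: "pairing_axioms B"
  shows "B (bas F) (bas G) = of_bool (paired F G)"
proof (induction "wt_f F" arbitrary: F G rule: less_induct)
  case less
  have bil: "bilinear_form B" and a1: "\<And>x. B (bas []) x = eps x"
    and a2: "\<And>x y z. B (mult x y) z = pair2 B (tens y x) (Delta z)"
    and a3: "\<And>x y. B (Bplus x) y = B x (gamma y)"
    using P unfolding pairing_axioms_def by auto
  consider "F = []" | T where "F = [Node T]" | t s ss where "F = t # s # ss"
    by (metis list.exhaust ptree.exhaust)
  then show ?case
  proof cases
    case 1
    then show ?thesis using a1 by (simp add: eps_def bas_def lookup_single when_def of_bool_def)
  next
    case (2 T)
    have "B (bas F) (bas G) = B (bas T) (gamma_f G)"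
      using a3 2 by (simp add: bas_Node gamma_bas)
    also have "\<dots> = of_bool (paired F G)"
    proof (cases G)
      case Nil then show ?thesis using 2 bilinear_form_zero_right[OF bil] by (simp add: of_bool_def)
    next
      case (Cons u us)
      show ?thesis
      proof (cases "u = Node []")
        case True
        then show ?thesis using less[of T] 2 Cons by simp
      next
        case False
        then show ?thesis using 2 Cons bilinear_form_zero_right[OF bil] by (simp add: of_bool_def)
      qed
    qed
    finally show ?thesis .
  next
    case (3 t s ss)
    have w1: "wt_f [t] < wt_f F" and w2: "wt_f (s # ss) < wt_f F"
      using 3 wt_t_gt_0[of s] wt_t_gt_0[of t] by auto
    have "B (bas F) (bas G) = pair2 B (tens (bas (s # ss)) (bas [t])) (Delta (bas G))"
      unfolding 3 bas_Cons[of t "s # ss"] by (rule a2)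
    also have "\<dots> = (\<Sum>k\<le>wt_f G.
        B (bas (s # ss)) (bas (take_vertices k G)) * B (bas [t]) (bas (drop_vertices k G)))"
      unfolding pair2_linext tens_bas Delta_bas linext_delta_f by simp
    also have "\<dots> = (\<Sum>k\<le>wt_f G.
        of_bool (paired (s # ss) (take_vertices k G)) * of_bool (paired [t] (drop_vertices k G)))"
      using less[OF w1] less[OF w2] by simp
    also have "\<dots> = of_bool (paired ([t] @ (s # ss)) G)"
      by (rule of_bool_paired_append[symmetric])
    finally show ?thesis using 3 by simp
  qed
qed

lemma pairing_axioms_unique: "pairing_axioms B \<Longrightarrow> B = tree_pairing"
proof (intro ext)
  fix x y assume P: "pairing_axioms B"
  then have bil: "bilinear_form B" unfolding pairing_axioms_def by simp
  show "B x y = tree_pairing x y"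
    unfolding bilinear_form_expand[OF bil, of x y] pairing_axioms_bas[OF P] tree_pairing_def ..
qed

section \<open>Symmetry, non-degeneracy and homogeneity\<close>

lemma tree_pairing_sym: "tree_pairing x y = tree_pairing y x"
  unfolding tree_pairing_def by (subst linext_swap) (simp add: paired_sym)

lemma tree_pairing_nondegenerate: "(\<And>y. tree_pairing x y = 0) \<Longrightarrow> x = 0"
proof (rule ccontr)
  assume annihilates: "\<And>y. tree_pairing x y = 0" and "x \<noteq> 0"
  then obtain F0 where "F0 \<in> Poly_Mapping.keys x" by fastforce
  then obtain F where F: "F \<in> Poly_Mapping.keys x"
    and least: "\<And>F'. F' \<in> Poly_Mapping.keys x \<Longrightarrow> sum_list (size_seq F) \<le> sum_list (size_seq F')"
    using ex_has_least_nat[of "\<lambda>F. F \<in> Poly_Mapping.keys x" F0 "\<lambda>F. sum_list (size_seq F)"] by blast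
  have "tree_pairing x (bas (rotate_forest F)) = Poly_Mapping.lookup x F"
    unfolding tree_pairing_bas_right linext_def
    by (subst sum_eq_single[OF _ F]) (auto dest: paired_rotate_forest_triangular least)
  then show False using annihilates F by (simp add: in_keys_iff)
qed

lemma tree_pairing_homogeneous:
  assumes "homogeneous n x" "homogeneous m y" "n \<noteq> m"
  shows "tree_pairing x y = 0"
proof -
  have "tree_pairing x y = linext (\<lambda>F. linext (\<lambda>G. 0) y) x"
    unfolding tree_pairing_def
  proof (rule linext_cong, rule linext_cong)
    fix F G assume "F \<in> Poly_Mapping.keys x" "G \<in> Poly_Mapping.keys y"
    then have "wt_f F \<noteq> wt_f G" using assms unfolding homogeneous_def by auto
    then show "of_bool (paired F G) = 0" using paired_wt by (auto simp: of_bool_def)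
  qed
  then show ?thesis by simp
qed

section \<open>Self-adjointness of the antipode\<close>

definition conv_form ::
    "(forest \<Rightarrow> forest \<Rightarrow> 'k::comm_ring_1) \<Rightarrow> (forest \<Rightarrow> forest \<Rightarrow> 'k) \<Rightarrow> forest \<Rightarrow> forest \<Rightarrow> 'k" where
  "conv_form f g F G = (\<Sum>i\<le>wt_f F. \<Sum>j\<le>wt_f G.
      f (take_vertices i F) (drop_vertices j G) * g (drop_vertices i F) (take_vertices j G))"

definition unit_form :: "forest \<Rightarrow> forest \<Rightarrow> 'k::comm_ring_1" where
  "unit_form F G = of_bool (F = [] \<and> G = [])"

lemma conv_form_unit_right: "conv_form f unit_form F G = f F G"
proof -
  have "conv_form f unit_form F G = (\<Sum>j\<le>wt_f G. f F (drop_vertices j G) * unit_form [] (take_vertices j G))"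
    unfolding conv_form_def
    by (subst sum_eq_single[of _ "wt_f F"]) (auto simp: unit_form_def drop_vertices_eq_Nil_iff take_vertices_all)
  also have "\<dots> = f F G"
    by (subst sum_eq_single[of _ 0]) (auto simp: unit_form_def take_vertices_eq_Nil_iff)
  finally show ?thesis .
qed

lemma conv_form_unit_left: "conv_form unit_form f F G = f F G"
proof -
  have "conv_form unit_form f F G = (\<Sum>j\<le>wt_f G. unit_form [] (drop_vertices j G) * f F (take_vertices j G))"
    unfolding conv_form_def
    by (subst sum_eq_single[of "{..wt_f F}" 0]) (auto simp: unit_form_def take_vertices_eq_Nil_iff intro!: sum.neutral)
  also have "\<dots> = f F G"
    by (subst sum_eq_single[of _ "wt_f G"]) (auto simp: unit_form_def drop_vertices_eq_Nil_iff take_vertices_all)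
  finally show ?thesis .
qed

lemma conv_form_conv_form_left: "conv_form (conv_form f g) h F G =
    (\<Sum>i\<le>wt_f F. \<Sum>i'\<le>wt_f F - i. \<Sum>j\<le>wt_f G. \<Sum>j'\<le>j.
      f (take_vertices i F) (drop_vertices j G) * g (take_vertices i' (drop_vertices i F)) (drop_vertices j' (take_vertices j G))
      * h (drop_vertices (i + i') F) (take_vertices j' G))"
  (is "_ = (\<Sum>i\<le>?n. \<Sum>i'\<le>?n - i. \<Sum>j\<le>?m. \<Sum>j'\<le>j. ?\<Phi> i i' j' j)")
proof -
  define \<Phi> where "\<Phi> = (\<lambda>i i' j' j. ?\<Phi> i i' j' j)"
  have "conv_form (conv_form f g) h F G = (\<Sum>a\<le>?n. \<Sum>b\<le>?m. \<Sum>i\<le>a. \<Sum>c\<le>?m - b. \<Phi> i (a - i) b (b + c))"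
    unfolding conv_form_def
  proof (intro sum.cong refl)
    fix a b assume a: "a \<in> {..?n}" and b: "b \<in> {..?m}"
    have "(\<Sum>i\<le>a. \<Sum>c\<le>?m - b. f (take_vertices i (take_vertices a F)) (drop_vertices c (drop_vertices b G))
          * g (drop_vertices i (take_vertices a F)) (take_vertices c (drop_vertices b G)))
        * h (drop_vertices a F) (take_vertices b G) = (\<Sum>i\<le>a. \<Sum>c\<le>?m - b. \<Phi> i (a - i) b (b + c))"
      unfolding sum_distrib_right
    proof (intro sum.cong refl)
      fix i c assume i: "i \<in> {..a}"
      then show "f (take_vertices i (take_vertices a F)) (drop_vertices c (drop_vertices b G))
          * g (drop_vertices i (take_vertices a F)) (take_vertices c (drop_vertices b G))
          * h (drop_vertices a F) (take_vertices b G) = \<Phi> i (a - i) b (b + c)"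
        using take_vertices_drop_vertices[of "a - i" i F]
        by (simp add: \<Phi>_def take_vertices_take_vertices drop_vertices_drop_vertices
            take_vertices_drop_vertices add.commute)
    qed
    then show "(\<Sum>i\<le>wt_f (take_vertices a F). \<Sum>j\<le>wt_f (drop_vertices b G).
          f (take_vertices i (take_vertices a F)) (drop_vertices j (drop_vertices b G))
          * g (drop_vertices i (take_vertices a F)) (take_vertices j (drop_vertices b G)))
        * h (drop_vertices a F) (take_vertices b G) = (\<Sum>i\<le>a. \<Sum>c\<le>?m - b. \<Phi> i (a - i) b (b + c))"
      using a by simp
  qed
  also have "\<dots> = (\<Sum>a\<le>?n. \<Sum>i\<le>a. \<Sum>b\<le>?m. \<Sum>c\<le>?m - b. \<Phi> i (a - i) b (b + c))"
    by (rule sum.cong[OF refl], rule sum.swap)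
  also have "\<dots> = (\<Sum>a\<le>?n. \<Sum>i\<le>a. \<Sum>j\<le>?m. \<Sum>j'\<le>j. \<Phi> i (a - i) j' j)"
    by (simp only: sum_triangle_shift)
  also have "\<dots> = (\<Sum>i\<le>?n. \<Sum>i'\<le>?n - i. \<Sum>j\<le>?m. \<Sum>j'\<le>j. \<Phi> i i' j' j)"
    by (rule sum_triangle_split)
  finally show ?thesis unfolding \<Phi>_def .
qed

lemma conv_form_conv_form_right: "conv_form f (conv_form g h) F G =
    (\<Sum>i\<le>wt_f F. \<Sum>i'\<le>wt_f F - i. \<Sum>j\<le>wt_f G. \<Sum>j'\<le>j.
      f (take_vertices i F) (drop_vertices j G) * g (take_vertices i' (drop_vertices i F)) (drop_vertices j' (take_vertices j G))
      * h (drop_vertices (i + i') F) (take_vertices j' G))"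
  (is "_ = (\<Sum>i\<le>?n. \<Sum>i'\<le>?n - i. \<Sum>j\<le>?m. \<Sum>j'\<le>j. ?\<Phi> i i' j' j)")
proof -
  have "conv_form f (conv_form g h) F G = (\<Sum>i\<le>?n. \<Sum>j\<le>?m. \<Sum>i'\<le>?n - i. \<Sum>j'\<le>j. ?\<Phi> i i' j' j)"
    unfolding conv_form_def
  proof (intro sum.cong refl)
    fix i j assume "j \<in> {..?m}"
    then have "wt_f (take_vertices j G) = j" by simp
    then show "f (take_vertices i F) (drop_vertices j G) *
        (\<Sum>i'\<le>wt_f (drop_vertices i F). \<Sum>j'\<le>wt_f (take_vertices j G).
          g (take_vertices i' (drop_vertices i F)) (drop_vertices j' (take_vertices j G))
          * h (drop_vertices i' (drop_vertices i F)) (take_vertices j' (take_vertices j G)))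
        = (\<Sum>i'\<le>?n - i. \<Sum>j'\<le>j. ?\<Phi> i i' j' j)"
      by (simp add: sum_distrib_left take_vertices_take_vertices drop_vertices_drop_vertices
          add.commute mult.assoc)
  qed
  also have "\<dots> = (\<Sum>i\<le>?n. \<Sum>i'\<le>?n - i. \<Sum>j\<le>?m. \<Sum>j'\<le>j. ?\<Phi> i i' j' j)"
    by (rule sum.cong[OF refl], rule sum.swap)
  finally show ?thesis .
qed

lemma conv_form_assoc: "conv_form (conv_form f g) h = conv_form f (conv_form g h)"
  by (intro ext) (simp only: conv_form_conv_form_left conv_form_conv_form_right)

lemma conv_form_inverse_unique:
  assumes "conv_form q p = unit_form" and "conv_form p r = unit_form"
  shows "q = r"
proof -
  have "q = conv_form q unit_form" by (intro ext) (simp add: conv_form_unit_right)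
  also have "\<dots> = conv_form (conv_form q p) r" by (simp only: assms(2)[symmetric] conv_form_assoc)
  also have "\<dots> = r" by (intro ext) (simp add: assms(1) conv_form_unit_left)
  finally show ?thesis .
qed

lemma tree_pairing_sc_left: "tree_pairing (sc c x) y = c * tree_pairing x y"
  using bilinear_tree_pairing unfolding bilinear_form_def by blast

lemma tree_pairing_conv_bas: "tree_pairing (conv f g (bas F)) y =
    (\<Sum>i\<le>wt_f F. tree_pairing (mult (f (bas (take_vertices i F))) (g (bas (drop_vertices i F)))) y)"
proof -
  have "tree_pairing (conv f g (bas F)) y =
      linext (\<lambda>p. tree_pairing (mult (f (bas (fst p))) (g (bas (snd p)))) y) (Delta (bas F))"
    unfolding conv_def bilinear_form_sum_left[OF bilinear_tree_pairing] linext_def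
    by (rule sum.cong[OF refl]) (simp add: case_prod_beta tree_pairing_sc_left)
  then show ?thesis by (simp add: Delta_bas linext_delta_f)
qed

lemma tree_pairing_mult_bas: "tree_pairing (mult u v) (bas G) =
    (\<Sum>j\<le>wt_f G. tree_pairing v (bas (take_vertices j G)) * tree_pairing u (bas (drop_vertices j G)))"
proof -
  have "tree_pairing (mult u v) (bas G) = linext (\<lambda>F1. linext (\<lambda>F2. \<Sum>j\<le>wt_f G.
      of_bool (paired F2 (take_vertices j G)) * of_bool (paired F1 (drop_vertices j G))) v) u"
    unfolding tree_pairing_bas_right linext_mult by (simp only: of_bool_paired_append)
  also have "\<dots> = (\<Sum>j\<le>wt_f G. linext (\<lambda>F1.
      linext (\<lambda>F2. of_bool (paired F2 (take_vertices j G))) v * of_bool (paired F1 (drop_vertices j G))) u)"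
    by (simp only: linext_fun_sum linext_fun_mult_right)
  also have "\<dots> = (\<Sum>j\<le>wt_f G. tree_pairing v (bas (take_vertices j G)) * tree_pairing u (bas (drop_vertices j G)))"
    by (simp only: linext_fun_mult_left tree_pairing_bas_right)
  finally show ?thesis .
qed

lemma tree_pairing_antipode_bas:
  assumes "is_antipode S"
  shows "tree_pairing (S (bas F)) (bas G) = tree_pairing (bas F) (S (bas G))"
proof -
  define Q where "Q F G = tree_pairing (S (bas F)) (bas G)" for F G
  define R where "R F G = tree_pairing (bas F) (S (bas G))" for F G
  define P where "P F G = (of_bool (paired F G) :: 'a)" for F G
  have conv: "conv S id = unit_counit" using assms unfolding is_antipode_def by simp
  have QP: "conv_form Q P F G = unit_form F G" for F G
  proof -
    have "conv_form Q P F G = tree_pairing (conv S id (bas F)) (bas G)"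
      unfolding tree_pairing_conv_bas tree_pairing_mult_bas conv_form_def
      by (rule sum.cong[OF refl], rule sum.cong[OF refl]) (simp add: Q_def P_def tree_pairing_bas mult.commute)
    also have "\<dots> = unit_form F G"
      by (simp add: conv unit_counit_def tree_pairing_sc_left tree_pairing_bas eps_def lookup_bas unit_form_def)
    finally show ?thesis .
  qed
  have PR: "conv_form P R F G = unit_form F G" for F G
  proof -
    have "conv_form P R F G = conv_form Q P G F"
      unfolding conv_form_def
      by (subst sum.swap) (simp add: Q_def R_def P_def tree_pairing_sym[of "S _"] paired_sym mult.commute)
    then show ?thesis using QP by (simp add: unit_form_def conj_commute)
  qed
  have "Q = R"
  proof (rule conv_form_inverse_unique)
    show "conv_form Q P = unit_form" using QP by (intro ext)
    show "conv_form P R = unit_form" using PR by (intro ext)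
  qed
  then have "Q F G = R F G" by simp
  then show ?thesis unfolding Q_def R_def .
qed

lemma bilinear_form_lin_map_left:
  "bilinear_form B \<Longrightarrow> lin_map S \<Longrightarrow> bilinear_form (\<lambda>x y. B (S x) y)"
  unfolding bilinear_form_def lin_map_def by simp

lemma bilinear_form_lin_map_right:
  "bilinear_form B \<Longrightarrow> lin_map S \<Longrightarrow> bilinear_form (\<lambda>x y. B x (S y))"
  unfolding bilinear_form_def lin_map_def by simp

lemma tree_pairing_antipode:
  assumes "is_antipode S"
  shows "tree_pairing (S x) y = tree_pairing x (S y)"
proof -
  have S: "lin_map S" using assms unfolding is_antipode_def by simp
  have "tree_pairing (S x) y = linext (\<lambda>F. linext (\<lambda>G. tree_pairing (S (bas F)) (bas G)) y) x"
    using bilinear_form_expand[OF bilinear_form_lin_map_left[OF bilinear_tree_pairing S], of x y] by simp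
  also have "\<dots> = linext (\<lambda>F. linext (\<lambda>G. tree_pairing (bas F) (S (bas G))) y) x"
    using tree_pairing_antipode_bas[OF assms] by simp
  also have "\<dots> = tree_pairing x (S y)"
    using bilinear_form_expand[OF bilinear_form_lin_map_right[OF bilinear_tree_pairing S], of x y] by simp
  finally show ?thesis .
qed

theorem theorem19:
  shows "(\<exists>!B :: 'k::field alg \<Rightarrow> 'k alg \<Rightarrow> 'k. pairing_axioms B)
    \<and> (\<forall>B :: 'k alg \<Rightarrow> 'k alg \<Rightarrow> 'k. pairing_axioms B \<longrightarrow>
         (\<forall>x y. B x y = B y x)
       \<and> (\<forall>x. (\<forall>y. B x y = 0) \<longrightarrow> x = 0)
       \<and> (\<forall>y. (\<forall>x. B x y = 0) \<longrightarrow> y = 0)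
       \<and> (\<forall>n m x y. homogeneous n x \<and> homogeneous m y \<and> n \<noteq> m \<longrightarrow> B x y = 0)
       \<and> (\<forall>S. is_antipode S \<longrightarrow> (\<forall>x y. B (S x) y = B x (S y))))"
proof (intro conjI allI impI)
  show "\<exists>!B :: 'k::field alg \<Rightarrow> 'k alg \<Rightarrow> 'k. pairing_axioms B"
    using pairing_axioms_tree_pairing pairing_axioms_unique by blast
next
  fix B :: "'k alg \<Rightarrow> 'k alg \<Rightarrow> 'k"
  assume "pairing_axioms B"
  then have B: "B = tree_pairing" by (rule pairing_axioms_unique)
  show "\<And>x y. B x y = B y x" unfolding B by (rule tree_pairing_sym)
  show "\<And>x. \<forall>y. B x y = 0 \<Longrightarrow> x = 0" unfolding B using tree_pairing_nondegenerate by blast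
  show "\<And>y. \<forall>x. B x y = 0 \<Longrightarrow> y = 0"
    unfolding B using tree_pairing_nondegenerate tree_pairing_sym by metis
  show "\<And>n m x y. homogeneous n x \<and> homogeneous m y \<and> n \<noteq> m \<Longrightarrow> B x y = 0"
    unfolding B using tree_pairing_homogeneous by blast
  show "\<And>S x y. is_antipode S \<Longrightarrow> B (S x) y = B x (S y)"
    unfolding B using tree_pairing_antipode by blast
qed

end
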